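(* Let $L(\lambda)\in\mathbb{C}[\lambda]^{m\times n}$ be a matrix pencil. Then $L(\lambda)$ is right invertible over $\mathbb{C}[\lambda]$ if and only if it has no finite eigenvalues and no left minimal indices. Moreover, in that case, there exists a polynomial right inverse of $L(\lambda)$ having degree at most $m-1$.
   Context: A matrix pencil is a polynomial matrix of degree at most $1$. $A(\lambda)\in\mathbb{C}[\lambda]^{m\times n}$ is right invertible over $\mathbb{C}[\lambda]$ if there is a polynomial matrix $A(\lambda)^R\in\mathbb{C}[\lambda]^{n\times m}$ with $A(\lambda)A(\lambda)^R=I_m$; by convention, if $m=0$ the empty $0\times n$ matrix is right invertible with right inverse its $n\times 0$ transpose. The normal rank of $L(\lambda)$ is its rank over the field $\mathbb{C}(\lambda)$; $\lambda_0\in\mathbb{C}$ is a finite eigenvalue if $\operatorname{rank}_{\mathbb{C}}L(\lambda_0)$ is less than the normal rank. The left null space is $\{y(\lambda)\in\mathbb{C}(\lambda)^m: y(\lambda)^*L(\lambda)=0\}$; the left minimal indices are the column degrees of a minimal polynomial basis of it (a polynomial basis with minimal sum of column degrees), so $L$ has no left minimal indices iff its left null space is $\{0\}$. *)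

theory Defs
  imports "Jordan_Normal_Form.DL_Rank" "HOL-Computational_Algebra.Fraction_Field"
begin

definition is_pencil :: "complex poly mat \<Rightarrow> bool" where
  "is_pencil L \<longleftrightarrow> (\<forall>i < dim_row L. \<forall>j < dim_col L. degree (L $$ (i,j)) \<le> 1)"

definition eval_pmat :: "complex poly mat \<Rightarrow> complex \<Rightarrow> complex mat" where
  "eval_pmat L x = map_mat (\<lambda>p. poly p x) L"

definition frac_mat :: "complex poly mat \<Rightarrow> complex poly fract mat" where
  "frac_mat L = map_mat (\<lambda>p. Fract p 1) L"

definition normal_rank :: "complex poly mat \<Rightarrow> nat" where
  "normal_rank L = vec_space.rank (dim_row L) (frac_mat L)"

definition finite_eigenvalue :: "complex poly mat \<Rightarrow> complex \<Rightarrow> bool" where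
  "finite_eigenvalue L x \<longleftrightarrow> vec_space.rank (dim_row L) (eval_pmat L x) < normal_rank L"

definition left_null_space :: "complex poly mat \<Rightarrow> complex poly fract vec set" where
  "left_null_space L = {y \<in> carrier_vec (dim_row L). transpose_mat (frac_mat L) *\<^sub>v y = 0\<^sub>v (dim_col L)}"

text \<open>As stated in the context: L has no left minimal indices iff its left null space is trivial.\<close>
definition no_left_minimal_indices :: "complex poly mat \<Rightarrow> bool" where
  "no_left_minimal_indices L \<longleftrightarrow> left_null_space L = {0\<^sub>v (dim_row L)}"

definition is_right_inverse :: "complex poly mat \<Rightarrow> complex poly mat \<Rightarrow> bool" where
  "is_right_inverse L R \<longleftrightarrow> R \<in> carrier_mat (dim_col L) (dim_row L) \<and> L * R = 1\<^sub>m (dim_row L)"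

definition right_invertible :: "complex poly mat \<Rightarrow> bool" where
  "right_invertible L \<longleftrightarrow> (\<exists>R. is_right_inverse L R)"

text \<open>Degree of a polynomial matrix bounded by d (d an integer, so that d = -1 is allowed
  for the empty case m = 0).\<close>
definition pmat_degree_le :: "complex poly mat \<Rightarrow> int \<Rightarrow> bool" where
  "pmat_degree_le R d \<longleftrightarrow> (\<forall>i < dim_row R. \<forall>j < dim_col R. int (degree (R $$ (i,j))) \<le> d)"

end

theory Submission
  imports Defs "Jordan_Normal_Form.Spectral_Radius"
begin

(* A right inverse R of L yields right inverses of L(x) for every x and of L over C(lambda), so
   both have full row rank m; by the definitions this means that L has neither finite
   eigenvalues nor left minimal indices.

   Conversely, write L = A + lambda B and look for R = X_0 + X_1 lambda + ... + X_(m-1) lambda^(m-1).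
   The identity L R = I is a linear system for the X_k. By the Fredholm alternative it is
   solvable once y_0 = 0 for every left kernel vector (y_0, ..., y_m) of the system, i.e. for
   every chain of rows with y_k A + y_(k+1) B = 0. Were y_0 nonzero, the span of y_0, ..., y_(j-1),
   for j least with y_0, ..., y_j dependent, would be invariant under the shift y_k -> y_(k+1);
   an eigenvector w of the shift, with eigenvalue mu, then satisfies w (A + mu B) = 0, against the
   full row rank of L(mu). *)

section \<open>Full row rank and solvability of linear systems\<close>

lemma underdetermined_system_nontrivial_solution:
  fixes A :: "'a::field mat"
  assumes A: "A \<in> carrier_mat r n" and rn: "r < n"
  obtains v where "v \<in> carrier_vec n" "v \<noteq> 0\<^sub>v n" "A *\<^sub>v v = 0\<^sub>v r"
proof -
  \<comment> \<open>pad \<open>A\<close> with zero rows to a singular square matrix\<close>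
  define c where "c i = (if i < r then row A i else 0\<^sub>v n)" for i
  define N where "N = mat\<^sub>r n n (\<lambda>i. if i = n - 1 then 0\<^sub>v n else c i)"
  have N: "N \<in> carrier_mat n n" unfolding N_def by simp
  have "det N = 0"
    unfolding N_def using rn A by (intro det_row_0) (auto simp: c_def)
  then obtain v where v: "v \<in> carrier_vec n" "v \<noteq> 0\<^sub>v n" "N *\<^sub>v v = 0\<^sub>v n"
    using det_0_iff_vec_prod_zero_field[OF N] by blast
  have "A *\<^sub>v v = 0\<^sub>v r"
  proof (rule eq_vecI)
    fix i assume "i < dim_vec (0\<^sub>v r :: 'a vec)"
    then have i: "i < r" by simp
    have "row N i = row A i" unfolding N_def c_def using i rn A by (subst row_mat_of_row_fun) auto
    then show "(A *\<^sub>v v) $ i = 0\<^sub>v r $ i"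
      using arg_cong[OF v(3), of "\<lambda>w. w $ i"] i rn A N by auto
  qed (use A in auto)
  with v that show ?thesis by blast
qed

lemma (in vec_space) maximal_lin_indpt_cols:
  assumes A: "A \<in> carrier_mat n nc"
  obtains S where "S \<subseteq> set (cols A)" "lin_indpt S" "card S = rank A" "set (cols A) \<subseteq> span S"
proof -
  let ?P = "\<lambda>T. T \<subseteq> set (cols A) \<and> lin_indpt T"
  obtain S where max: "maximal S ?P"
    using maximal_exists[of ?P "card (set (cols A))" "{}"]
    by (meson List.finite_set card_mono empty_iff empty_subsetI finite_lin_indpt2 rev_finite_subset)
  then have S: "S \<subseteq> set (cols A)" "lin_indpt S" unfolding maximal_def by auto
  have cols: "set (cols A) \<subseteq> carrier_vec n" using A cols_dim by blast
  have "c \<in> span S" if c: "c \<in> set (cols A)" for c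
  proof (rule ccontr)
    assume nc: "c \<notin> span S"
    then have "c \<notin> S" using in_own_span[of S] S cols by auto
    then have "lin_indpt (S \<union> {c})" using lin_dep_iff_in_span[of S c] S cols nc c by auto
    moreover have "S \<union> {c} \<subseteq> set (cols A)" using S c by auto
    ultimately have "S = S \<union> {c}" using max unfolding maximal_def by blast
    with \<open>c \<notin> S\<close> show False by auto
  qed
  then have "set (cols A) \<subseteq> span S" by blast
  with S rank_card_indpt[OF A max] show thesis by (intro that) auto
qed

lemma (in vec_space) transpose_mult_vec_eq_0_iff:
  fixes A :: "'a mat"
  assumes A: "A \<in> carrier_mat n nc" and y: "y \<in> carrier_vec n"
  shows "transpose_mat A *\<^sub>v y = 0\<^sub>v nc \<longleftrightarrow> y \<in> orthogonal_complement (set (cols A))"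
proof -
  have entry: "(transpose_mat A *\<^sub>v y) $ j = y \<bullet> col A j" if "j < nc" for j
    using A y that by (simp add: comm_scalar_prod[of y n])
  have "set (cols A) = col A ` {..<nc}" using A by (auto simp: cols_def)
  then show ?thesis using A y entry by (auto simp: vec_eq_iff orthogonal_complement_def)
qed

lemma (in vec_space) orthogonal_complement_carrier_vec:
  "orthogonal_complement (carrier_vec n :: 'a vec set) = {0\<^sub>v n}"
proof
  show "orthogonal_complement (carrier_vec n :: 'a vec set) \<subseteq> {0\<^sub>v n}"
  proof
    fix y :: "'a vec" assume "y \<in> orthogonal_complement (carrier_vec n)"
    then have y: "y \<in> carrier_vec n" and orth: "\<And>v. v \<in> carrier_vec n \<Longrightarrow> y \<bullet> v = 0"
      unfolding orthogonal_complement_def by auto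
    have "y $ i = 0" if "i < n" for i
    proof -
      have "y \<bullet> unit_vec n i = 0" by (rule orth) simp
      then show ?thesis using y that by simp
    qed
    then show "y \<in> {0\<^sub>v n}" using y by (auto simp: vec_eq_iff)
  qed
  show "{0\<^sub>v n} \<subseteq> orthogonal_complement (carrier_vec n :: 'a vec set)"
    by (simp add: orthogonal_complement_def)
qed

lemma (in vec_space) orthogonal_complement_nontrivial:
  fixes S :: "'a vec set"
  assumes S: "S \<subseteq> carrier_vec n" "finite S" and card: "card S < n"
  obtains y where "y \<in> orthogonal_complement S" "y \<noteq> 0\<^sub>v n"
proof -
  obtain ss where ss: "set ss = S" "distinct ss" using finite_distinct_list[OF S(2)] by blast
  have rows: "mat_of_rows n ss \<in> carrier_mat (card S) n" using ss distinct_card by fastforce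
  obtain y where y: "y \<in> carrier_vec n" "y \<noteq> 0\<^sub>v n" "mat_of_rows n ss *\<^sub>v y = 0\<^sub>v (card S)"
    by (rule underdetermined_system_nontrivial_solution[OF rows card])
  have "y \<bullet> s = 0" if "s \<in> S" for s
  proof -
    obtain i where i: "i < length ss" "s = ss ! i" using ss \<open>s \<in> S\<close> by (auto simp: in_set_conv_nth)
    then have "row (mat_of_rows n ss) i = s" using S(1) \<open>s \<in> S\<close> by (auto intro: mat_of_rows_row)
    then have "s \<bullet> y = 0"
      using arg_cong[OF y(3), of "\<lambda>w. w $ i"] i ss distinct_card[OF ss(2)] by simp
    then show ?thesis using comm_scalar_prod[of y n s] y S(1) \<open>s \<in> S\<close> by auto
  qed
  with y that show ?thesis unfolding orthogonal_complement_def by blast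
qed

lemma (in vec_space) rank_eq_dim_row_iff:
  assumes A: "A \<in> carrier_mat n nc"
  shows "rank A = n \<longleftrightarrow> (\<forall>y \<in> carrier_vec n. transpose_mat A *\<^sub>v y = 0\<^sub>v nc \<longrightarrow> y = 0\<^sub>v n)"
proof -
  obtain S where S: "S \<subseteq> set (cols A)" "lin_indpt S" "card S = rank A" "set (cols A) \<subseteq> span S"
    by (rule maximal_lin_indpt_cols[OF A])
  have SC: "S \<subseteq> carrier_vec n" using S(1) A cols_dim by blast
  have fin: "finite S" using S(1) finite_subset by blast
  have "orthogonal_complement (set (cols A)) = orthogonal_complement S"
    using orthogonal_complement_subset[OF S(1)] orthogonal_complement_subset[OF S(4)]
    unfolding in_orthogonal_complement_span[OF SC] by auto
  then have kernel_iff: "transpose_mat A *\<^sub>v y = 0\<^sub>v nc \<longleftrightarrow> y \<in> orthogonal_complement S"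
    if "y \<in> carrier_vec n" for y
    using transpose_mult_vec_eq_0_iff[OF A that] by simp
  have "card S \<le> n" using li_le_dim(2)[OF fin_dim SC S(2)] by (simp add: dim_is_n)
  show ?thesis
  proof
    assume "rank A = n"
    then have "basis S" using dim_li_is_basis[OF fin_dim fin SC S(2)] S(3) by (simp add: dim_is_n)
    then have "span S = carrier_vec n" unfolding basis_def by auto
    have "orthogonal_complement S = orthogonal_complement (span S)"
      using in_orthogonal_complement_span[OF SC] by simp
    also have "\<dots> = {0\<^sub>v n}"
      using \<open>span S = carrier_vec n\<close> orthogonal_complement_carrier_vec by simp
    finally have "orthogonal_complement S = {0\<^sub>v n}" .
    then show "\<forall>y \<in> carrier_vec n. transpose_mat A *\<^sub>v y = 0\<^sub>v nc \<longrightarrow> y = 0\<^sub>v n"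
      using kernel_iff by blast
  next
    assume trivial: "\<forall>y \<in> carrier_vec n. transpose_mat A *\<^sub>v y = 0\<^sub>v nc \<longrightarrow> y = 0\<^sub>v n"
    show "rank A = n"
    proof (rule ccontr)
      assume "rank A \<noteq> n"
      then have "card S < n" using \<open>card S \<le> n\<close> S(3) by simp
      then obtain y where "y \<in> orthogonal_complement S" "y \<noteq> 0\<^sub>v n"
        by (rule orthogonal_complement_nontrivial[OF SC fin])
      then show False using trivial kernel_iff unfolding orthogonal_complement_def by blast
    qed
  qed
qed

lemma (in vec_space) rank_le_dim_row:
  assumes A: "A \<in> carrier_mat n nc"
  shows "rank A \<le> n"
proof -
  obtain S where S: "S \<subseteq> set (cols A)" "lin_indpt S" "card S = rank A"
    by (rule maximal_lin_indpt_cols[OF A])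
  have "S \<subseteq> carrier_vec n" using S(1) A cols_dim by blast
  then show ?thesis using li_le_dim(2)[OF fin_dim _ S(2)] S(3) by (simp add: dim_is_n)
qed

lemma (in vec_space) rank_eq_dim_row_if_right_inverse:
  assumes A: "A \<in> carrier_mat n nc" and B: "B \<in> carrier_mat nc n" and AB: "A * B = 1\<^sub>m n"
  shows "rank A = n"
  unfolding rank_eq_dim_row_iff[OF A]
proof (intro ballI impI)
  fix y assume y: "y \<in> carrier_vec n" and ker: "transpose_mat A *\<^sub>v y = 0\<^sub>v nc"
  have "y = transpose_mat (A * B) *\<^sub>v y" using AB y by simp
  also have "\<dots> = transpose_mat B *\<^sub>v (transpose_mat A *\<^sub>v y)"
    using A B y by (simp add: transpose_mult assoc_mult_mat_vec[of _ n nc _ n])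
  also have "\<dots> = 0\<^sub>v n" using ker B by (intro eq_vecI) (auto simp: scalar_prod_def)
  finally show "y = 0\<^sub>v n" .
qed

lemma pivot_fun_inj:
  fixes E :: "'a::zero_neq_one mat"
  assumes E: "E \<in> carrier_mat p q" and pivot: "pivot_fun E f q"
    and "i < p" "i' < p" "f i = f i'" "f i < q"
  shows "i = i'"
proof (rule ccontr)
  note pD = pivot_funD[OF carrier_matD(1)[OF E] pivot]
  assume "i \<noteq> i'"
  then have "E $$ (i', f i) = 0" using pD(5)[of i i'] assms by auto
  moreover have "E $$ (i', f i') = 1" using pD(4)[of i'] assms by auto
  ultimately show False using assms by simp
qed

lemma pivot_fun_mult_solvable:
  fixes E :: "'a::field mat"
  assumes E: "E \<in> carrier_mat p q" and D: "D \<in> carrier_mat p r" and pivot: "pivot_fun E f q"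
    and zero_rows: "\<And>i c. i < p \<Longrightarrow> f i = q \<Longrightarrow> c < r \<Longrightarrow> D $$ (i, c) = 0"
  obtains X where "X \<in> carrier_mat q r" "E * X = D"
proof -
  note pD = pivot_funD[OF carrier_matD(1)[OF E] pivot]
  note inj = pivot_fun_inj[OF E pivot]
  define X where "X = mat q r (\<lambda>(j,c). if \<exists>i<p. f i = j then D $$ (THE i. i < p \<and> f i = j, c) else 0)"
  have XC: "X \<in> carrier_mat q r" unfolding X_def by auto
  have entry: "E $$ (i, j) * X $$ (j, c) = (if j = f i then D $$ (i, c) else 0)"
    if i: "i < p" and j: "j < q" and c: "c < r" for i j c
  proof (cases "\<exists>i'<p. f i' = j")
    case True
    then obtain i' where i': "i' < p" "f i' = j" by auto
    have "(THE i. i < p \<and> f i = j) = i'" using i' inj j by (intro the_equality) auto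
    then have X: "X $$ (j, c) = D $$ (i', c)" unfolding X_def using j c True by simp
    show ?thesis
    proof (cases "i' = i")
      case True
      then show ?thesis using X i' pD(4)[OF i] j by auto
    next
      case False
      then have "E $$ (i, f i') = 0" using pD(5)[of i' i] i i' j by auto
      moreover have "j \<noteq> f i" using inj[of i i'] False i i' j by auto
      ultimately show ?thesis using X i' by auto
    qed
  next
    case False
    then show ?thesis unfolding X_def using i j c by auto
  qed
  have "E * X = D"
  proof (rule eq_matI)
    fix i c assume "i < dim_row D" "c < dim_col D"
    then have i: "i < p" and c: "c < r" using D by auto
    have "(E * X) $$ (i, c) = (\<Sum>j<q. E $$ (i, j) * X $$ (j, c))"
      using E XC i c by (simp add: scalar_prod_def atLeast0LessThan)
    also have "\<dots> = (\<Sum>j<q. if j = f i then D $$ (i, c) else 0)"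
      using entry[OF i _ c] by (intro sum.cong) auto
    also have "\<dots> = D $$ (i, c)"
      using pD(1)[OF i] zero_rows[OF i _ c] by (cases "f i < q") auto
    finally show "(E * X) $$ (i, c) = D $$ (i, c)" .
  qed (use E XC D in auto)
  with XC that show ?thesis by blast
qed

text \<open>After Gauss--Jordan elimination \<open>P M = E\<close>, each zero row \<open>i\<close>
  of \<open>E\<close> gives the left kernel vector \<open>P\<^sup>T e\<^sub>i\<close> of \<open>M\<close>, so the same row of \<open>P B\<close> vanishes.\<close>

lemma mat_mult_solvable_if_left_kernel_subset:
  fixes M :: "'a::field mat"
  assumes M: "M \<in> carrier_mat p q" and B: "B \<in> carrier_mat p r"
    and kernel: "\<And>y. y \<in> carrier_vec p \<Longrightarrow> transpose_mat M *\<^sub>v y = 0\<^sub>v q \<Longrightarrow> transpose_mat B *\<^sub>v y = 0\<^sub>v r"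
  obtains X where "X \<in> carrier_mat q r" "M * X = B"
proof -
  obtain E D where gj: "gauss_jordan M B = (E, D)" by (cases "gauss_jordan M B") auto
  from gauss_jordan_transform[OF M B gj, unfolded ring_mat_def Units_def, simplified]
  obtain P where P: "P \<in> carrier_mat p p" and EPM: "E = P * M" and DPB: "D = P * B" by auto
  have E: "E \<in> carrier_mat p q" and D: "D \<in> carrier_mat p r" using gauss_jordan[OF M B gj] by auto
  from gauss_jordan_row_echelon[OF M gj] obtain f where pivot: "pivot_fun E f q"
    unfolding row_echelon_form_def using E by auto
  have zero_rows: "D $$ (i, c) = 0" if i: "i < p" and fi: "f i = q" and c: "c < r" for i c
  proof -
    define y where "y = transpose_mat P *\<^sub>v unit_vec p i"
    have y: "y \<in> carrier_vec p" unfolding y_def using P by auto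
    have row0: "row E i = 0\<^sub>v q" using pivot_fun_zero_row_iff[OF pivot E i] fi by auto
    have "E $$ (i, j) = 0" if "j < q" for j
      using arg_cong[OF row0, of "\<lambda>v. v $ j"] E i that by simp
    then have "transpose_mat E *\<^sub>v unit_vec p i = 0\<^sub>v q"
      using E i by (intro eq_vecI) auto
    moreover have "transpose_mat M *\<^sub>v y = transpose_mat E *\<^sub>v unit_vec p i"
      unfolding y_def EPM using P M by (simp add: transpose_mult assoc_mult_mat_vec[of _ q p _ p])
    ultimately have "transpose_mat B *\<^sub>v y = 0\<^sub>v r" using kernel[OF y] by simp
    moreover have "transpose_mat B *\<^sub>v y = transpose_mat D *\<^sub>v unit_vec p i"
      unfolding y_def DPB using P B by (simp add: transpose_mult assoc_mult_mat_vec[of _ r p _ p])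
    ultimately have "(transpose_mat D *\<^sub>v unit_vec p i) $ c = 0" using c by simp
    then show ?thesis using D i c by simp
  qed
  obtain X where X: "X \<in> carrier_mat q r" "E * X = D"
    by (rule pivot_fun_mult_solvable[OF E D pivot zero_rows])
  then have "M * X = B" using gauss_jordan[OF M B gj] by auto
  with X(1) that show ?thesis by blast
qed

section \<open>Chains in the left kernel of a pencil without eigenvalues\<close>

text \<open>A family of vectors in \<open>'a\<^sup>m\<close> is a function \<open>ys\<close>, with \<open>ys k i\<close> the \<open>i\<close>-th entry of the
  \<open>k\<close>-th vector; likewise \<open>A i l\<close> is the \<open>(i, l)\<close> entry of the \<open>m \<times> n\<close> matrix \<open>A\<close>.\<close>

lemma Suc_dim_vectors_dependent:
  fixes ys :: "nat \<Rightarrow> nat \<Rightarrow> 'a::field"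
  obtains c where "\<exists>k\<le>m. c k \<noteq> 0" "\<forall>i<m. (\<Sum>k\<le>m. c k * ys k i) = 0"
proof -
  define Y where "Y = mat m (Suc m) (\<lambda>(i, k). ys k i)"
  obtain v where v: "v \<in> carrier_vec (Suc m)" "v \<noteq> 0\<^sub>v (Suc m)" "Y *\<^sub>v v = 0\<^sub>v m"
    by (rule underdetermined_system_nontrivial_solution[of Y m "Suc m"]) (auto simp: Y_def)
  have "\<exists>k\<le>m. v $ k \<noteq> 0"
    using v(1,2) by (auto simp: vec_eq_iff less_Suc_eq_le)
  moreover have "(\<Sum>k\<le>m. v $ k * ys k i) = 0" if i: "i < m" for i
  proof -
    have "(Y *\<^sub>v v) $ i = (\<Sum>k\<le>m. v $ k * ys k i)"
      using i v(1) unfolding Y_def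
      by (auto simp: scalar_prod_def atLeast0LessThan lessThan_Suc_atMost mult.commute intro!: sum.cong)
    then show ?thesis using v(3) i by simp
  qed
  ultimately show ?thesis by (intro that[of "\<lambda>k. v $ k"]) auto
qed

text \<open>For the least \<open>j\<close> such that \<open>ys 0, \<dots>, ys j\<close> are dependent, the independent vectors
  \<open>ys 0, \<dots>, ys (j - 1)\<close> span a space that contains \<open>ys 1, \<dots>, ys j\<close>; \<open>C\<close> is the matrix of the
  shift \<open>ys k \<mapsto> ys (Suc k)\<close> on it.\<close>

lemma shift_invariant_independent_prefix:
  fixes ys :: "nat \<Rightarrow> nat \<Rightarrow> 'a::field"
  assumes nonzero: "\<exists>i<m. ys 0 i \<noteq> 0"
  obtains j C where "0 < j" "j \<le> m"
    "\<And>c. \<forall>i<m. (\<Sum>k<j. c k * ys k i) = 0 \<Longrightarrow> \<forall>k<j. c k = 0"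
    "\<And>k i. k < j \<Longrightarrow> i < m \<Longrightarrow> ys (Suc k) i = (\<Sum>k'<j. C k k' * ys k' i)"
proof -
  define dep where "dep j \<longleftrightarrow> (\<exists>c. (\<exists>k\<le>j. c k \<noteq> 0) \<and> (\<forall>i<m. (\<Sum>k\<le>j. c k * ys k i) = 0))" for j
  have "dep m" unfolding dep_def by (rule Suc_dim_vectors_dependent[of m ys]) blast
  define j where "j = (LEAST j. dep j)"
  have dep_j: "dep j" unfolding j_def by (rule LeastI[of dep, OF \<open>dep m\<close>])
  have jm: "j \<le> m" unfolding j_def by (rule Least_le[of dep, OF \<open>dep m\<close>])
  have j0: "j \<noteq> 0"
  proof
    assume "j = 0"
    with dep_j nonzero show False unfolding dep_def by auto
  qed
  have indep: "\<forall>k<j. c k = 0" if c: "\<forall>i<m. (\<Sum>k<j. c k * ys k i) = 0" for c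
  proof (rule ccontr)
    assume "\<not> (\<forall>k<j. c k = 0)"
    moreover have "{..j - 1} = {..<j}" using j0 by auto
    ultimately have "dep (j - 1)"
      unfolding dep_def using c by (intro exI[of _ c]) auto
    then show False using not_less_Least[of "j - 1" dep] j0 unfolding j_def by auto
  qed
  obtain c where c: "\<exists>k\<le>j. c k \<noteq> 0" "\<forall>i<m. (\<Sum>k<j. c k * ys k i) + c j * ys j i = 0"
    using dep_j unfolding dep_def by (auto simp: lessThan_Suc_atMost[symmetric])
  have cj: "c j \<noteq> 0"
  proof
    assume "c j = 0"
    then have "\<forall>k<j. c k = 0" using c(2) by (intro indep) simp
    with \<open>c j = 0\<close> c(1) show False by (metis le_neq_implies_less)
  qed
  define C where "C k k' = (if Suc k < j then (if k' = Suc k then 1 else 0) else - c k' / c j)" for k k'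
  have shift: "ys (Suc k) i = (\<Sum>k'<j. C k k' * ys k' i)" if k: "k < j" and i: "i < m" for k i
  proof (cases "Suc k < j")
    case True
    then have "(\<Sum>k'<j. C k k' * ys k' i) = (\<Sum>k'<j. if k' = Suc k then ys k' i else 0)"
      unfolding C_def by (intro sum.cong) auto
    then show ?thesis using True by simp
  next
    case False
    then have "Suc k = j" using k by auto
    moreover have "ys j i = - (\<Sum>k<j. c k * ys k i) / c j"
      using c(2) i cj by (simp add: field_simps add_eq_0_iff)
    ultimately show ?thesis
      unfolding C_def using False by (simp add: sum_divide_distrib sum_negf)
  qed
  show thesis using that j0 jm indep shift by blast
qed

lemma complex_left_eigenvector_exists:
  fixes C :: "nat \<Rightarrow> nat \<Rightarrow> complex"
  assumes j: "0 < j"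
  obtains v \<mu> where "\<exists>k<j. v k \<noteq> 0" "\<And>l. l < j \<Longrightarrow> (\<Sum>k<j. v k * C k l) = \<mu> * v l"
proof -
  define Ct where "Ct = mat j j (\<lambda>(l, k). C k l)"
  have Ct: "Ct \<in> carrier_mat j j" unfolding Ct_def by simp
  obtain \<mu> where "eigenvalue Ct \<mu>" using spectrum_non_empty[OF Ct j] unfolding spectrum_def by auto
  then obtain v where v: "v \<in> carrier_vec j" "v \<noteq> 0\<^sub>v j" "Ct *\<^sub>v v = \<mu> \<cdot>\<^sub>v v"
    unfolding eigenvalue_def eigenvector_def using Ct by auto
  have "\<exists>k<j. v $ k \<noteq> 0" using v(1,2) by (auto simp: vec_eq_iff)
  moreover have "(\<Sum>k<j. v $ k * C k l) = \<mu> * v $ l" if l: "l < j" for l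
  proof -
    have "(Ct *\<^sub>v v) $ l = (\<Sum>k<j. v $ k * C k l)"
      using l v(1) unfolding Ct_def
      by (auto simp: scalar_prod_def atLeast0LessThan mult.commute intro!: sum.cong)
    then show ?thesis using v(3) v(1) l by simp
  qed
  ultimately show ?thesis by (intro that[of "\<lambda>k. v $ k" \<mu>]) auto
qed

lemma sum_lincomb_swap:
  fixes a :: "'k \<Rightarrow> 'a::comm_semiring_0"
  shows "(\<Sum>i\<in>I. (\<Sum>k\<in>K. a k * b k i) * e i) = (\<Sum>k\<in>K. a k * (\<Sum>i\<in>I. b k i * e i))"
  unfolding sum_distrib_right sum_distrib_left by (subst sum.swap) (simp add: mult.assoc)

text \<open>If \<open>ys 0 \<noteq> 0\<close>, a left eigenvector \<open>w\<close>, with eigenvalue \<open>\<mu>\<close>, of the shift on the span of the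
  \<open>ys k\<close> satisfies \<open>w A = - \<mu> w B\<close>.\<close>

lemma pencil_chain_vanishes:
  fixes A B ys :: "nat \<Rightarrow> nat \<Rightarrow> complex"
  assumes regular: "\<And>\<mu> w. \<forall>l<n. (\<Sum>i<m. w i * (A i l + \<mu> * B i l)) = 0 \<Longrightarrow> \<forall>i<m. w i = 0"
    and chain: "\<And>k l. k < m \<Longrightarrow> l < n \<Longrightarrow>
      (\<Sum>i<m. ys k i * A i l) + (\<Sum>i<m. ys (Suc k) i * B i l) = 0"
  shows "\<forall>i<m. ys 0 i = 0"
proof (rule ccontr)
  assume "\<not> (\<forall>i<m. ys 0 i = 0)"
  then have nonzero: "\<exists>i<m. ys 0 i \<noteq> 0" by blast
  obtain j C where j: "0 < j" "j \<le> m"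
    and indep: "\<And>c. \<forall>i<m. (\<Sum>k<j. c k * ys k i) = 0 \<Longrightarrow> \<forall>k<j. c k = 0"
    and shift: "\<And>k i. k < j \<Longrightarrow> i < m \<Longrightarrow> ys (Suc k) i = (\<Sum>k'<j. C k k' * ys k' i)"
    using shift_invariant_independent_prefix[of m ys, OF nonzero] by blast
  obtain v \<mu> where v: "\<exists>k<j. v k \<noteq> 0" "\<And>l. l < j \<Longrightarrow> (\<Sum>k<j. v k * C k l) = \<mu> * v l"
    using complex_left_eigenvector_exists[where C = C, OF j(1)] by blast
  define w where "w i = (\<Sum>k<j. v k * ys k i)" for i
  have "(\<Sum>i<m. w i * (A i l + \<mu> * B i l)) = 0" if l: "l < n" for l
  proof -
    define T where "T k = (\<Sum>i<m. ys k i * B i l)" for k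
    have T_shift: "T (Suc k) = (\<Sum>k'<j. C k k' * T k')" if k: "k < j" for k
    proof -
      have "T (Suc k) = (\<Sum>i<m. (\<Sum>k'<j. C k k' * ys k' i) * B i l)"
        unfolding T_def using shift[OF k] by (intro sum.cong) auto
      also have "\<dots> = (\<Sum>k'<j. C k k' * T k')" unfolding T_def by (rule sum_lincomb_swap)
      finally show ?thesis .
    qed
    have wB: "(\<Sum>i<m. w i * B i l) = (\<Sum>k<j. v k * T k)"
      unfolding w_def T_def by (rule sum_lincomb_swap)
    have "(\<Sum>i<m. w i * A i l) = (\<Sum>k<j. v k * (\<Sum>i<m. ys k i * A i l))"
      unfolding w_def by (rule sum_lincomb_swap)
    also have "\<dots> = (\<Sum>k<j. v k * (- T (Suc k)))"
    proof (intro sum.cong refl)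
      fix k assume "k \<in> {..<j}"
      then have "k < m" using j(2) by auto
      from chain[OF this l] show "v k * (\<Sum>i<m. ys k i * A i l) = v k * (- T (Suc k))"
        unfolding T_def by (simp add: eq_neg_iff_add_eq_0 flip: distrib_left)
    qed
    also have "\<dots> = - (\<Sum>k<j. v k * (\<Sum>k'<j. C k k' * T k'))"
      using T_shift by (simp add: sum_negf)
    also have "(\<Sum>k<j. v k * (\<Sum>k'<j. C k k' * T k')) = (\<Sum>k'<j. (\<Sum>k<j. v k * C k k') * T k')"
      by (simp add: sum_distrib_left sum_distrib_right mult.assoc) (rule sum.swap)
    also have "\<dots> = \<mu> * (\<Sum>i<m. w i * B i l)"
      unfolding wB sum_distrib_left using v(2) by (intro sum.cong) (auto simp: mult.assoc)
    finally show ?thesis by (simp add: algebra_simps sum.distrib sum_distrib_left)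
  qed
  then have "\<forall>i<m. w i = 0" by (intro regular[where \<mu> = \<mu>]) simp
  then have "\<forall>k<j. v k = 0" unfolding w_def by (rule indep)
  with v(1) show False by blast
qed

section \<open>The coefficient system of a polynomial right inverse\<close>

lemma block_index_less: "k < K \<Longrightarrow> i < m \<Longrightarrow> k * m + i < K * (m::nat)"
proof -
  assume "k < K" "i < m"
  then have "k * m + i < Suc k * m" by simp
  also have "\<dots> \<le> K * m" using \<open>k < K\<close> by (intro mult_le_mono1) simp
  finally show ?thesis .
qed

lemma sum_lessThan_mult_blocks:
  fixes f :: "nat \<Rightarrow> 'a::comm_monoid_add"
  shows "(\<Sum>e<K * m. f e) = (\<Sum>k<K. \<Sum>i<m. f (k * m + i))"
  using sum.nat_group[of f m K, symmetric]
  by (simp add: sum.atLeastLessThan_shift_0[of f] atLeast0LessThan comp_def)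

text \<open>The matrix of \<open>x(\<lambda>) \<mapsto> (A + \<lambda> B) x(\<lambda>)\<close>, from polynomial \<open>n\<close>-vectors of degree \<open>< m\<close>
  to polynomial \<open>m\<close>-vectors of degree \<open>\<le> m\<close>, each stored as its stacked coefficient vectors:
  the \<open>m \<times> n\<close> block \<open>(t, k)\<close> is \<open>A\<close> if \<open>t = k\<close> and \<open>B\<close> if \<open>t = k + 1\<close>.\<close>

definition pencil_block_mat ::
  "nat \<Rightarrow> nat \<Rightarrow> (nat \<Rightarrow> nat \<Rightarrow> 'a::monoid_add) \<Rightarrow> (nat \<Rightarrow> nat \<Rightarrow> 'a) \<Rightarrow> 'a mat" where
  "pencil_block_mat m n A B = mat (Suc m * m) (m * n) (\<lambda>(e, u).
     (if u div n = e div m then A (e mod m) (u mod n) else 0) +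
     (if Suc (u div n) = e div m then B (e mod m) (u mod n) else 0))"

lemma pencil_block_mat_carrier: "pencil_block_mat m n A B \<in> carrier_mat (Suc m * m) (m * n)"
  by (simp add: pencil_block_mat_def)

lemma index_pencil_block_mat:
  assumes "t \<le> m" "i < m" "k < m" "l < n"
  shows "pencil_block_mat m n A B $$ (t * m + i, k * n + l) =
    (if k = t then A i l else 0) + (if Suc k = t then B i l else 0)"
  using assms block_index_less[of t "Suc m" i m] block_index_less[of k m l n]
  by (simp add: pencil_block_mat_def)

lemma pencil_block_mat_left_kernel:
  fixes A B :: "nat \<Rightarrow> nat \<Rightarrow> 'a::comm_semiring_0"
  assumes y: "y \<in> carrier_vec (Suc m * m)"
    and ker: "transpose_mat (pencil_block_mat m n A B) *\<^sub>v y = 0\<^sub>v (m * n)"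
    and k: "k < m" and l: "l < n"
  shows "(\<Sum>i<m. y $ (k * m + i) * A i l) + (\<Sum>i<m. y $ (Suc k * m + i) * B i l) = 0"
proof -
  let ?M = "pencil_block_mat m n A B"
  have kl: "k * n + l < m * n" by (rule block_index_less[OF k l])
  have "0 = (transpose_mat ?M *\<^sub>v y) $ (k * n + l)" using ker kl by simp
  also have "\<dots> = (\<Sum>e<Suc m * m. ?M $$ (e, k * n + l) * y $ e)"
    using kl y pencil_block_mat_carrier[of m n A B]
    by (auto simp: scalar_prod_def atLeast0LessThan intro!: sum.cong)
  also have "\<dots> = (\<Sum>t<Suc m. \<Sum>i<m. ?M $$ (t * m + i, k * n + l) * y $ (t * m + i))"
    by (rule sum_lessThan_mult_blocks)
  also have "\<dots> = (\<Sum>t<Suc m. (if k = t then (\<Sum>i<m. y $ (k * m + i) * A i l) else 0)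
      + (if Suc k = t then (\<Sum>i<m. y $ (Suc k * m + i) * B i l) else 0))"
    using k l by (intro sum.cong refl)
      (auto simp: index_pencil_block_mat sum.distrib mult.commute distrib_left)
  also have "\<dots> = (\<Sum>i<m. y $ (k * m + i) * A i l) + (\<Sum>i<m. y $ (Suc k * m + i) * B i l)"
    using k by (simp add: sum.distrib del: mult_Suc)
  finally show ?thesis by simp
qed

lemma index_pencil_block_mat_mult:
  fixes A B :: "nat \<Rightarrow> nat \<Rightarrow> 'a::comm_semiring_0"
  assumes X: "X \<in> carrier_mat (m * n) r" and t: "t \<le> m" and i: "i < m" and j: "j < r"
  defines "x k l \<equiv> if k < m then X $$ (k * n + l, j) else 0"
  shows "(pencil_block_mat m n A B * X) $$ (t * m + i, j) =
    (\<Sum>l<n. A i l * x t l) + (if t = 0 then 0 else \<Sum>l<n. B i l * x (t - 1) l)"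
proof -
  let ?M = "pencil_block_mat m n A B"
  have ti: "t * m + i < Suc m * m" using block_index_less[of t "Suc m" i m] t i by simp
  have "(?M * X) $$ (t * m + i, j) = (\<Sum>u<m * n. ?M $$ (t * m + i, u) * X $$ (u, j))"
    using X ti j pencil_block_mat_carrier[of m n A B]
    by (auto simp: scalar_prod_def atLeast0LessThan intro!: sum.cong)
  also have "\<dots> = (\<Sum>k<m. \<Sum>l<n. ?M $$ (t * m + i, k * n + l) * X $$ (k * n + l, j))"
    by (rule sum_lessThan_mult_blocks)
  also have "\<dots> = (\<Sum>k<m. (if k = t then (\<Sum>l<n. A i l * X $$ (k * n + l, j)) else 0)
      + (if Suc k = t then (\<Sum>l<n. B i l * X $$ (k * n + l, j)) else 0))"
    using t i by (intro sum.cong refl) (auto simp: index_pencil_block_mat sum.distrib distrib_right)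
  also have "\<dots> = (\<Sum>l<n. A i l * x t l) + (if t = 0 then 0 else \<Sum>l<n. B i l * x (t - 1) l)"
    unfolding x_def using t by (cases t) (auto simp: sum.distrib cong: if_cong)
  finally show ?thesis .
qed

text \<open>The coefficient blocks of the constant polynomial matrix \<open>1\<^sub>m m\<close>.\<close>

definition unit_block_mat :: "nat \<Rightarrow> 'a::{zero,one} mat" where
  "unit_block_mat m = mat (Suc m * m) m (\<lambda>(e, j). if e = j then 1 else 0)"

lemma pencil_block_system_solvable:
  fixes A B :: "nat \<Rightarrow> nat \<Rightarrow> complex"
  assumes regular: "\<And>\<mu> w. \<forall>l<n. (\<Sum>i<m. w i * (A i l + \<mu> * B i l)) = 0 \<Longrightarrow> \<forall>i<m. w i = 0"
  shows "\<exists>X \<in> carrier_mat (m * n) m. pencil_block_mat m n A B * X = unit_block_mat m"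
proof -
  have E: "unit_block_mat m \<in> carrier_mat (Suc m * m) m" by (simp add: unit_block_mat_def)
  have "transpose_mat (unit_block_mat m) *\<^sub>v y = 0\<^sub>v m"
    if y: "y \<in> carrier_vec (Suc m * m)"
      and ker: "transpose_mat (pencil_block_mat m n A B) *\<^sub>v y = 0\<^sub>v (m * n)" for y
  proof -
    have "\<forall>i<m. y $ (0 * m + i) = 0"
      by (rule pencil_chain_vanishes[where ys = "\<lambda>k i. y $ (k * m + i)", OF regular])
        (use pencil_block_mat_left_kernel[OF y ker] in auto)
    then have y0: "y $ i = 0" if "i < m" for i using that by simp
    show ?thesis
    proof (rule eq_vecI)
      fix j assume "j < dim_vec (0\<^sub>v m :: complex vec)"
      then have j: "j < m" by simp
      then have jb: "j < Suc m * m" by simp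
      have "(transpose_mat (unit_block_mat m) *\<^sub>v y) $ j = (\<Sum>e<Suc m * m. (if e = j then 1 else 0) * y $ e)"
        using j jb y unfolding unit_block_mat_def
        by (auto simp: scalar_prod_def atLeast0LessThan intro!: sum.cong)
      also have "\<dots> = (\<Sum>e<Suc m * m. if e = j then y $ e else 0)"
        by (intro sum.cong) auto
      also have "\<dots> = y $ j" using jb by (simp only: sum.delta finite_lessThan) simp
      finally show "(transpose_mat (unit_block_mat m) *\<^sub>v y) $ j = 0\<^sub>v m $ j" using y0[OF j] j by simp
    qed (simp add: unit_block_mat_def)
  qed
  then obtain X where "X \<in> carrier_mat (m * n) m" "pencil_block_mat m n A B * X = unit_block_mat m"
    using mat_mult_solvable_if_left_kernel_subset[OF pencil_block_mat_carrier E] by blast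
  then show ?thesis by blast
qed

definition poly_mat_of_coeff_blocks :: "nat \<Rightarrow> nat \<Rightarrow> 'a::comm_monoid_add mat \<Rightarrow> 'a poly mat" where
  "poly_mat_of_coeff_blocks d n X = mat n (dim_col X) (\<lambda>(l, j). \<Sum>k<d. monom (X $$ (k * n + l, j)) k)"

lemma poly_mat_of_coeff_blocks_carrier:
  "poly_mat_of_coeff_blocks d n X \<in> carrier_mat n (dim_col X)"
  by (simp add: poly_mat_of_coeff_blocks_def)

lemma coeff_poly_mat_of_coeff_blocks:
  assumes "l < n" "j < dim_col X"
  shows "coeff (poly_mat_of_coeff_blocks d n X $$ (l, j)) k = (if k < d then X $$ (k * n + l, j) else 0)"
  using assms by (simp add: poly_mat_of_coeff_blocks_def coeff_sum)

lemma degree_poly_mat_of_coeff_blocks: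
  assumes "l < n" "j < dim_col X"
  shows "degree (poly_mat_of_coeff_blocks d n X $$ (l, j)) \<le> d - 1"
  by (rule degree_le) (use coeff_poly_mat_of_coeff_blocks[OF assms] in auto)

section \<open>Right inverses of pencils\<close>

lemma degree_le_1_eq: "degree p \<le> 1 \<Longrightarrow> p = [:coeff p 0, coeff p 1:]"
  by (rule poly_eqI) (auto simp: coeff_pCons coeff_eq_0 split: nat.split)

lemma poly_degree_le_1: "degree p \<le> 1 \<Longrightarrow> poly p x = coeff p 0 + x * coeff p 1"
  by (subst degree_le_1_eq) simp_all

lemma coeff_mult_degree_le_1:
  "degree p \<le> 1 \<Longrightarrow>
    coeff (p * q) t = coeff p 0 * coeff q t + (if t = 0 then 0 else coeff p 1 * coeff q (t - 1))"
  by (subst degree_le_1_eq) (simp_all add: coeff_pCons split: nat.split)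

lemma coeff_pencil_mult:
  assumes pencil: "is_pencil L" and R: "R \<in> carrier_mat (dim_col L) r"
    and i: "i < dim_row L" and j: "j < r"
  shows "coeff ((L * R) $$ (i, j)) t =
    (\<Sum>l<dim_col L. coeff (L $$ (i, l)) 0 * coeff (R $$ (l, j)) t) +
    (if t = 0 then 0 else \<Sum>l<dim_col L. coeff (L $$ (i, l)) 1 * coeff (R $$ (l, j)) (t - 1))"
proof -
  have "coeff ((L * R) $$ (i, j)) t = (\<Sum>l<dim_col L. coeff (L $$ (i, l) * R $$ (l, j)) t)"
    using R i j by (simp add: scalar_prod_def atLeast0LessThan coeff_sum)
  also have "\<dots> = (\<Sum>l<dim_col L. coeff (L $$ (i, l)) 0 * coeff (R $$ (l, j)) t +
      (if t = 0 then 0 else coeff (L $$ (i, l)) 1 * coeff (R $$ (l, j)) (t - 1)))"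
    using pencil i unfolding is_pencil_def by (intro sum.cong refl) (simp add: coeff_mult_degree_le_1)
  finally show ?thesis by (cases t) (simp_all add: sum.distrib)
qed

lemma pencil_mult_poly_mat_of_coeff_blocks:
  assumes pencil: "is_pencil L" and L: "L \<in> carrier_mat m n" and X: "X \<in> carrier_mat (m * n) m"
    and solves: "pencil_block_mat m n (\<lambda>i l. coeff (L $$ (i, l)) 0) (\<lambda>i l. coeff (L $$ (i, l)) 1) * X
      = unit_block_mat m"
  shows "L * poly_mat_of_coeff_blocks m n X = 1\<^sub>m m"
proof (rule eq_matI)
  let ?R = "poly_mat_of_coeff_blocks m n X"
  let ?A = "\<lambda>i l. coeff (L $$ (i, l)) 0" and ?B = "\<lambda>i l. coeff (L $$ (i, l)) 1"
  have R: "?R \<in> carrier_mat n m" using poly_mat_of_coeff_blocks_carrier[of m n X] X by simp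
  fix i j assume "i < dim_row (1\<^sub>m m :: complex poly mat)" "j < dim_col (1\<^sub>m m :: complex poly mat)"
  then have i: "i < m" and j: "j < m" by auto
  define x where "x k l = (if k < m then X $$ (k * n + l, j) else 0)" for k l
  have coeff_R: "coeff (?R $$ (l, j)) k = x k l" if "l < n" for l k
    unfolding x_def using coeff_poly_mat_of_coeff_blocks[of l n j X m k] that j X by simp
  show "(L * ?R) $$ (i, j) = 1\<^sub>m m $$ (i, j)"
  proof (rule poly_eqI)
    fix t
    have "coeff ((L * ?R) $$ (i, j)) t = (\<Sum>l<n. coeff (L $$ (i, l)) 0 * x t l) +
        (if t = 0 then 0 else \<Sum>l<n. coeff (L $$ (i, l)) 1 * x (t - 1) l)"
      using coeff_pencil_mult[OF pencil _ _ j, of ?R i t] L R i coeff_R by simp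
    also have "\<dots> = coeff (1\<^sub>m m $$ (i, j)) t"
    proof (cases "t \<le> m")
      case True
      have "t * m + i < Suc m * m" using block_index_less[of t "Suc m" i m] True i by simp
      then have unit: "unit_block_mat m $$ (t * m + i, j) = coeff (1\<^sub>m m $$ (i, j)) t"
        unfolding unit_block_mat_def using i j by (cases t) auto
      have "(\<Sum>l<n. ?A i l * x t l) + (if t = 0 then 0 else \<Sum>l<n. ?B i l * x (t - 1) l) =
          (pencil_block_mat m n ?A ?B * X) $$ (t * m + i, j)"
        unfolding x_def by (rule index_pencil_block_mat_mult[OF X True i j, symmetric])
      also have "\<dots> = unit_block_mat m $$ (t * m + i, j)" by (simp only: solves)
      also have "\<dots> = coeff (1\<^sub>m m $$ (i, j)) t" by (fact unit)
      finally show ?thesis .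
    next
      case False
      then show ?thesis unfolding x_def using i j by auto
    qed
    finally show "coeff ((L * ?R) $$ (i, j)) t = coeff (1\<^sub>m m $$ (i, j)) t" .
  qed
qed (use L X poly_mat_of_coeff_blocks_carrier[of m n X] in auto)

lemma pencil_left_kernel_trivial:
  assumes pencil: "is_pencil L" and L: "L \<in> carrier_mat m n"
    and full: "vec_space.rank m (eval_pmat L \<mu>) = m"
    and w: "\<forall>l<n. (\<Sum>i<m. w i * (coeff (L $$ (i, l)) 0 + \<mu> * coeff (L $$ (i, l)) 1)) = 0"
  shows "\<forall>i<m. w i = 0"
proof -
  have E: "eval_pmat L \<mu> \<in> carrier_mat m n" using L by (simp add: eval_pmat_def)
  have "transpose_mat (eval_pmat L \<mu>) *\<^sub>v vec m w = 0\<^sub>v n"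
  proof (rule eq_vecI)
    fix l assume "l < dim_vec (0\<^sub>v n :: complex vec)"
    then have l: "l < n" by simp
    have "(transpose_mat (eval_pmat L \<mu>) *\<^sub>v vec m w) $ l = (\<Sum>i<m. poly (L $$ (i, l)) \<mu> * w i)"
      using l L by (auto simp: eval_pmat_def scalar_prod_def atLeast0LessThan intro!: sum.cong)
    also have "\<dots> = (\<Sum>i<m. w i * (coeff (L $$ (i, l)) 0 + \<mu> * coeff (L $$ (i, l)) 1))"
      using pencil l L unfolding is_pencil_def
      by (intro sum.cong refl) (simp add: poly_degree_le_1 mult.commute)
    finally show "(transpose_mat (eval_pmat L \<mu>) *\<^sub>v vec m w) $ l = 0\<^sub>v n $ l"
      using w l by simp
  qed (use E in simp)
  moreover have "\<forall>y \<in> carrier_vec m. transpose_mat (eval_pmat L \<mu>) *\<^sub>v y = 0\<^sub>v n \<longrightarrow> y = 0\<^sub>v m"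
    using full vec_space.rank_eq_dim_row_iff[OF E] by simp
  ultimately have "vec m w = 0\<^sub>v m" by simp
  then have "vec m w $ i = 0" if "i < m" for i using that by simp
  then show ?thesis by simp
qed

lemma pencil_right_inverse_exists:
  assumes pencil: "is_pencil L" and L: "L \<in> carrier_mat m n"
    and full: "\<And>x. vec_space.rank m (eval_pmat L x) = m"
  shows "\<exists>R. is_right_inverse L R \<and> pmat_degree_le R (int m - 1)"
proof -
  let ?A = "\<lambda>i l. coeff (L $$ (i, l)) 0" and ?B = "\<lambda>i l. coeff (L $$ (i, l)) 1"
  have regular: "\<forall>i<m. w i = 0" if "\<forall>l<n. (\<Sum>i<m. w i * (?A i l + \<mu> * ?B i l)) = 0" for \<mu> w
    using that by (rule pencil_left_kernel_trivial[OF pencil L full])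
  have "\<exists>X \<in> carrier_mat (m * n) m. pencil_block_mat m n ?A ?B * X = unit_block_mat m"
    by (rule pencil_block_system_solvable) (rule regular)
  then obtain X where X: "X \<in> carrier_mat (m * n) m" "pencil_block_mat m n ?A ?B * X = unit_block_mat m"
    by blast
  define R where "R = poly_mat_of_coeff_blocks m n X"
  have R: "R \<in> carrier_mat n m"
    using poly_mat_of_coeff_blocks_carrier[of m n X] X(1) unfolding R_def by simp
  have "L * R = 1\<^sub>m m" unfolding R_def by (rule pencil_mult_poly_mat_of_coeff_blocks[OF pencil L X])
  with L R have "is_right_inverse L R" by (simp add: is_right_inverse_def)
  moreover have "pmat_degree_le R (int m - 1)"
    unfolding pmat_degree_le_def
  proof (intro allI impI)
    fix l j assume "l < dim_row R" "j < dim_col R"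
    then have l: "l < n" and j: "j < m" using R by auto
    have "degree (R $$ (l, j)) \<le> m - 1"
      unfolding R_def by (rule degree_poly_mat_of_coeff_blocks) (use l j X in auto)
    then show "int (degree (R $$ (l, j))) \<le> int m - 1" using j by linarith
  qed
  ultimately show ?thesis by blast
qed

lemma (in semiring_hom) mat_hom_right_inverse:
  assumes "A \<in> carrier_mat m n" "B \<in> carrier_mat n m" "A * B = 1\<^sub>m m"
  shows "mat\<^sub>h A * mat\<^sub>h B = 1\<^sub>m m"
  using mat_hom_mult[OF assms(1,2)] assms(3) by (simp add: mat_hom_one)

lemma semiring_hom_Fract: "semiring_hom (\<lambda>p :: 'a::idom. Fract p 1)"
  by unfold_locales (auto simp: add_fract mult_fract fract_collapse)

lemma right_inverse_imp_full_rank: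
  assumes "is_right_inverse L R"
  shows "normal_rank L = dim_row L" "vec_space.rank (dim_row L) (eval_pmat L x) = dim_row L"
proof -
  let ?m = "dim_row L" and ?n = "dim_col L"
  have L: "L \<in> carrier_mat ?m ?n" and R: "R \<in> carrier_mat ?n ?m" and LR: "L * R = 1\<^sub>m ?m"
    using assms unfolding is_right_inverse_def by auto
  have frac: "frac_mat L * frac_mat R = 1\<^sub>m ?m"
    unfolding frac_mat_def by (rule semiring_hom.mat_hom_right_inverse[OF semiring_hom_Fract L R LR])
  show "normal_rank L = ?m"
    unfolding normal_rank_def
    by (rule vec_space.rank_eq_dim_row_if_right_inverse[OF _ _ frac])
      (use R in \<open>simp_all add: frac_mat_def\<close>)
  have eval: "eval_pmat L x * eval_pmat R x = 1\<^sub>m ?m"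
    unfolding eval_pmat_def by (rule poly_hom.mat_hom_right_inverse[OF L R LR])
  show "vec_space.rank ?m (eval_pmat L x) = ?m"
    by (rule vec_space.rank_eq_dim_row_if_right_inverse[OF _ _ eval])
      (use R in \<open>simp_all add: eval_pmat_def\<close>)
qed

lemma no_left_minimal_indices_iff_normal_rank:
  "no_left_minimal_indices L \<longleftrightarrow> normal_rank L = dim_row L"
proof -
  have F: "frac_mat L \<in> carrier_mat (dim_row L) (dim_col L)" by (simp add: frac_mat_def)
  have "0\<^sub>v (dim_row L) \<in> left_null_space L"
    using F by (auto simp: left_null_space_def)
  then show ?thesis
    unfolding no_left_minimal_indices_def normal_rank_def vec_space.rank_eq_dim_row_iff[OF F]
    by (auto simp: left_null_space_def)
qed

lemma no_finite_eigenvalue_iff: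
  assumes "normal_rank L = dim_row L"
  shows "(\<nexists>x. finite_eigenvalue L x) \<longleftrightarrow> (\<forall>x. vec_space.rank (dim_row L) (eval_pmat L x) = dim_row L)"
proof -
  have "vec_space.rank (dim_row L) (eval_pmat L x) \<le> dim_row L" for x
    by (rule vec_space.rank_le_dim_row[of _ _ "dim_col L"]) (simp add: eval_pmat_def)
  then show ?thesis unfolding finite_eigenvalue_def assms by (metis le_neq_implies_less less_irrefl)
qed

theorem lemma5p2:
  fixes L :: "complex poly mat"
  assumes "is_pencil L"
  shows "(right_invertible L \<longleftrightarrow>
            (\<not> (\<exists>x. finite_eigenvalue L x)) \<and> no_left_minimal_indices L)
       \<and> (right_invertible L \<longrightarrow>
            (\<exists>R. is_right_inverse L R \<and> pmat_degree_le R (int (dim_row L) - 1)))"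
proof -
  let ?m = "dim_row L"
  let ?full_rank = "normal_rank L = ?m \<and> (\<forall>x. vec_space.rank ?m (eval_pmat L x) = ?m)"
  have "right_invertible L \<Longrightarrow> ?full_rank"
    unfolding right_invertible_def using right_inverse_imp_full_rank by blast
  moreover have "?full_rank \<Longrightarrow> \<exists>R. is_right_inverse L R \<and> pmat_degree_le R (int ?m - 1)"
    using pencil_right_inverse_exists[OF assms, of ?m "dim_col L"] by simp
  moreover have "(\<nexists>x. finite_eigenvalue L x) \<and> no_left_minimal_indices L \<longleftrightarrow> ?full_rank"
    using no_finite_eigenvalue_iff no_left_minimal_indices_iff_normal_rank by blast
  ultimately show ?thesis unfolding right_invertible_def by blast
qed

end
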